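(* Let $q\ge 2$ and $n\ge 1$. If a quasi-complementary Lee metric Gray code of $q$-ary $n$-tuples exists, then $n$ is even, or $q$ is odd, or $n=1$.
   Context: The Lee distance between $v,u\in\mathbb{Z}_q^n$ is $\sum_{i=1}^n \min\{|v_i-u_i|,\,q-|v_i-u_i|\}$ (entries regarded as integers in $\{0,\ldots,q-1\}$). A quasi-complementary Lee metric Gray code of $q$-ary $n$-tuples is an ordering $G(0),\ldots,G(q^n-1)$ of all $q^n$ words of $\mathbb{Z}_q^n$ such that consecutive words $G(i),G(i+1)$ ($0\le i<q^n-1$) have Lee distance $1$, and $G((i+q^{n-1})\bmod q^n)=G(i)+(1,1,\ldots,1)$ for all $i$, with addition of words in $\mathbb{Z}_q^n$. *)

theory Defs
  imports Main
begin

definition words :: "nat \<Rightarrow> nat \<Rightarrow> (nat \<Rightarrow> nat) set" where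
  "words q n = {v. (\<forall>i<n. v i < q) \<and> (\<forall>i\<ge>n. v i = 0)}"

definition lee_dist :: "nat \<Rightarrow> nat \<Rightarrow> (nat \<Rightarrow> nat) \<Rightarrow> (nat \<Rightarrow> nat) \<Rightarrow> nat" where
  "lee_dist q n v u = (\<Sum>i<n. min (nat \<bar>int (v i) - int (u i)\<bar>) (q - nat \<bar>int (v i) - int (u i)\<bar>))"

definition word_add :: "nat \<Rightarrow> nat \<Rightarrow> (nat \<Rightarrow> nat) \<Rightarrow> (nat \<Rightarrow> nat) \<Rightarrow> (nat \<Rightarrow> nat)" where
  "word_add q n v u = (\<lambda>i. if i < n then (v i + u i) mod q else 0)"

definition all_ones :: "nat \<Rightarrow> (nat \<Rightarrow> nat)" where
  "all_ones n = (\<lambda>i. if i < n then 1 else 0)"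

definition quasi_compl_lee_gray :: "nat \<Rightarrow> nat \<Rightarrow> (nat \<Rightarrow> (nat \<Rightarrow> nat)) \<Rightarrow> bool" where
  "quasi_compl_lee_gray q n G \<longleftrightarrow>
     bij_betw G {..<q ^ n} (words q n) \<and>
     (\<forall>i. i + 1 < q ^ n \<longrightarrow> lee_dist q n (G i) (G (i + 1)) = 1) \<and>
     (\<forall>i<q ^ n. G ((i + q ^ (n - 1)) mod q ^ n) = word_add q n (G i) (all_ones n))"

end

theory Submission
  imports Defs
begin

text \<open>For even \<open>q\<close> the coordinate sum of a word is a parity invariant: a Lee step of
  length 1 changes it by an odd amount, and adding \<open>(1,\<dots>,1)\<close> changes it by \<open>n\<close> modulo 2.
  Walking along the code from \<open>G 0\<close> to \<open>G (q^(n-1)) = G 0 + (1,\<dots>,1)\<close> takes \<open>q^(n-1)\<close>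
  steps, an even number when \<open>n \<ge> 2\<close>, so \<open>n\<close> must be even.\<close>

definition coord_sum :: "nat \<Rightarrow> (nat \<Rightarrow> nat) \<Rightarrow> nat" where
  "coord_sum n v = (\<Sum>i<n. v i)"

lemma even_add_lee_coord:
  fixes a b q :: nat
  assumes "even q" "a < q" "b < q"
  shows "even (a + b + min (nat \<bar>int a - int b\<bar>) (q - nat \<bar>int a - int b\<bar>))"
proof -
  define d where "d = nat \<bar>int a - int b\<bar>"
  have "a + b + d = 2 * max a b"
    unfolding d_def by (simp add: max_def) arith
  then have even_d: "even (a + b + d)"
    by simp
  have "d \<le> q"
    using assms(2,3) unfolding d_def by linarith
  then have "a + b + (q - d) + 2 * d = (a + b + d) + q"
    by simp
  then have even_q_minus_d: "even (a + b + (q - d))"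
    using even_d assms(1) by (metis dvd_add_left_iff even_add even_mult_iff even_numeral)
  have "min d (q - d) = d \<or> min d (q - d) = q - d"
    by (simp add: min_def)
  with even_d even_q_minus_d show ?thesis
    unfolding d_def by metis
qed

lemma odd_coord_sum_lee_step:
  assumes "even q" "v \<in> words q n" "u \<in> words q n" "lee_dist q n v u = 1"
  shows "odd (coord_sum n v + coord_sum n u)"
proof -
  let ?lee = "\<lambda>i. min (nat \<bar>int (v i) - int (u i)\<bar>) (q - nat \<bar>int (v i) - int (u i)\<bar>)"
  have "even (\<Sum>i<n. v i + u i + ?lee i)"
    using assms(1-3) even_add_lee_coord by (intro dvd_sum) (auto simp: words_def)
  also have "(\<Sum>i<n. v i + u i + ?lee i) = coord_sum n v + coord_sum n u + lee_dist q n v u"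
    unfolding coord_sum_def lee_dist_def by (simp add: sum.distrib)
  finally show ?thesis
    using assms(4) by simp
qed

lemma even_add_succ_mod:
  fixes a q :: nat
  assumes "even q" "a < q"
  shows "even ((a + 1) mod q + a + 1)"
proof (cases "a + 1 = q")
  case True
  then have "(a + 1) mod q + a + 1 = q"
    by simp
  then show ?thesis
    using assms(1) by simp
next
  case False
  with assms(2) have "(a + 1) mod q + a + 1 = 2 * (a + 1)"
    by simp
  then show ?thesis
    by simp
qed

lemma even_coord_sum_add_all_ones:
  assumes "even q" "v \<in> words q n"
  shows "even (coord_sum n (word_add q n v (all_ones n)) + coord_sum n v + n)"
proof -
  have "even (\<Sum>i<n. word_add q n v (all_ones n) i + v i + 1)"
    using assms even_add_succ_mod
    by (intro dvd_sum) (auto simp: words_def word_add_def all_ones_def)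
  also have "(\<Sum>i<n. word_add q n v (all_ones n) i + v i + 1)
      = coord_sum n (word_add q n v (all_ones n)) + coord_sum n v + n"
    unfolding coord_sum_def sum.distrib by simp
  finally show ?thesis .
qed

lemma even_add_of_alternating_parity:
  fixes f :: "nat \<Rightarrow> nat"
  assumes "\<And>i. Suc i < N \<Longrightarrow> odd (f i + f (Suc i))" and "k < N"
  shows "even (f k + f 0 + k)"
  using assms(2)
proof (induction k)
  case (Suc k)
  have "f k + f (Suc k) + (f k + f 0 + k) + 1 = 2 * f k + (f (Suc k) + f 0 + Suc k)"
    by simp
  moreover have "even (f k + f (Suc k) + (f k + f 0 + k) + 1)"
    using Suc assms(1)[of k] by simp
  ultimately show ?case
    by (metis even_add even_mult_iff even_numeral)
qed simp

theorem proposition1: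
  fixes q n :: nat
  assumes "q \<ge> 2" and "n \<ge> 1"
    and "\<exists>G. quasi_compl_lee_gray q n G"
  shows "even n \<or> odd q \<or> n = 1"
proof (rule ccontr)
  assume "\<not> (even n \<or> odd q \<or> n = 1)"
  then have "even q" "odd n" "n \<ge> 2"
    using assms(2) by auto
  obtain G where "bij_betw G {..<q ^ n} (words q n)"
    and step: "\<And>i. i + 1 < q ^ n \<Longrightarrow> lee_dist q n (G i) (G (i + 1)) = 1"
    and shift: "\<And>i. i < q ^ n \<Longrightarrow> G ((i + q ^ (n - 1)) mod q ^ n) = word_add q n (G i) (all_ones n)"
    using assms(3) unfolding quasi_compl_lee_gray_def by blast
  then have word: "\<And>k. k < q ^ n \<Longrightarrow> G k \<in> words q n"
    using bij_betwE by blast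
  let ?m = "q ^ (n - 1)"
  have "0 < q ^ n" "?m < q ^ n" "even ?m"
    using assms(1) \<open>even q\<close> \<open>n \<ge> 2\<close> by (simp_all add: power_strict_increasing)
  have "even (coord_sum n (G ?m) + coord_sum n (G 0) + ?m)"
    using even_add_of_alternating_parity[of "q ^ n" "\<lambda>k. coord_sum n (G k)"]
      odd_coord_sum_lee_step[OF \<open>even q\<close> word word step] \<open>?m < q ^ n\<close> by simp
  moreover have "G ?m = word_add q n (G 0) (all_ones n)"
    using shift[of 0] \<open>0 < q ^ n\<close> \<open>?m < q ^ n\<close> by simp
  then have "even (coord_sum n (G ?m) + coord_sum n (G 0) + n)"
    using even_coord_sum_add_all_ones[OF \<open>even q\<close> word[OF \<open>0 < q ^ n\<close>]] by simp
  ultimately show False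
    using \<open>even ?m\<close> \<open>odd n\<close> by simp
qed

end
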